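(* Let $n\ge 3$, $c\ge 1$, and let $\upsilon':UV_n(c)\to\mathrm{GL}_n(\mathbb{C})$ be the representation \[ \upsilon'(\rho_i)=\mathrm{diag}\Big(I_{i-1},\begin{pmatrix}0&1\\ 1&0\end{pmatrix},I_{n-i-1}\Big),\qquad \upsilon'(\sigma_{i,t})=\mathrm{diag}\Big(I_{i-1},\begin{pmatrix}s_{1,t}&s_{2,t}\\ s_{3,t}&s_{4,t}\end{pmatrix},I_{n-i-1}\Big) \] for $1\le i\le n-1$, $1\le t\le c$, where $s_{j,t}\in\mathbb{C}$ with $s_{1,t}s_{4,t}-s_{2,t}s_{3,t}\neq0$. Then $\upsilon'$ is reducible if and only if either $s_{1,t}+s_{2,t}=1$ and $s_{3,t}+s_{4,t}=1$ for all $1\le t\le c$, or $s_{1,t}+s_{3,t}=1$ and $s_{2,t}+s_{4,t}=1$ for all $1\le t\le c$.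
   Context: $UV_n(c)$ is the group with generators $\rho_i$ ($1\le i\le n-1$), $\sigma_{i,t}$ ($1\le i\le n-1$, $1\le t\le c$) and relations $\rho_i\rho_{i+1}\rho_i=\rho_{i+1}\rho_i\rho_{i+1}$, $\rho_i\rho_j=\rho_j\rho_i$ ($|i-j|\ge2$), $\rho_i^2=1$, $\sigma_{i,t}\sigma_{j,\ell}=\sigma_{j,\ell}\sigma_{i,t}$ ($|i-j|\ge2$), $\sigma_{i,t}\rho_j=\rho_j\sigma_{i,t}$ ($|i-j|\ge2$), $\rho_i\rho_{i+1}\sigma_{i,t}=\sigma_{i+1,t}\rho_i\rho_{i+1}$ ($1\le i\le n-2$). $\mathrm{diag}(\cdot,\cdot,\cdot)$ denotes a block diagonal matrix and $I_r$ the $r\times r$ identity. A representation is reducible if $\mathbb{C}^n$ has a nonzero proper subspace invariant under all the image matrices. *)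

theory Defs
  imports Complex_Main "Jordan_Normal_Form.Matrix"
begin

text \<open>Matrices are n x n complex matrices; indices are 0-based, so the paper's
  coordinates 1..n correspond to 0..n-1.  The block diag(I_{i-1}, M, I_{n-i-1})
  places the 2x2 matrix M in rows/columns i-1, i (0-based).\<close>

definition blk :: "nat \<Rightarrow> nat \<Rightarrow> complex mat \<Rightarrow> complex mat" where
  "blk n i M = mat n n (\<lambda>(a, b).
     if a \<in> {i - 1, i} \<and> b \<in> {i - 1, i} then M $$ (a - (i - 1), b - (i - 1))
     else if a = b then 1 else 0)"

definition mat2 :: "complex \<Rightarrow> complex \<Rightarrow> complex \<Rightarrow> complex \<Rightarrow> complex mat" where
  "mat2 a b c d = mat_of_rows_list 2 [[a, b], [c, d]]"

definition rho_img :: "nat \<Rightarrow> nat \<Rightarrow> complex mat" where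
  "rho_img n i = blk n i (mat2 0 1 1 0)"

definition sigma_img :: "nat \<Rightarrow> (nat \<Rightarrow> complex) \<Rightarrow> (nat \<Rightarrow> complex) \<Rightarrow>
    (nat \<Rightarrow> complex) \<Rightarrow> (nat \<Rightarrow> complex) \<Rightarrow> nat \<Rightarrow> nat \<Rightarrow> complex mat" where
  "sigma_img n s1 s2 s3 s4 i t = blk n i (mat2 (s1 t) (s2 t) (s3 t) (s4 t))"

definition gen_imgs :: "nat \<Rightarrow> nat \<Rightarrow> (nat \<Rightarrow> complex) \<Rightarrow> (nat \<Rightarrow> complex) \<Rightarrow>
    (nat \<Rightarrow> complex) \<Rightarrow> (nat \<Rightarrow> complex) \<Rightarrow> complex mat set" where
  "gen_imgs n c s1 s2 s3 s4 =
     {rho_img n i | i. 1 \<le> i \<and> i \<le> n - 1} \<union>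
     {sigma_img n s1 s2 s3 s4 i t | i t. 1 \<le> i \<and> i \<le> n - 1 \<and> 1 \<le> t \<and> t \<le> c}"

text \<open>The image of a representation is the subgroup of GL_n generated by the
  images of the generators.\<close>
inductive_set gen_group :: "nat \<Rightarrow> complex mat set \<Rightarrow> complex mat set"
  for n :: nat and S :: "complex mat set" where
  gen: "A \<in> S \<Longrightarrow> A \<in> gen_group n S"
| one: "1\<^sub>m n \<in> gen_group n S"
| mult: "A \<in> gen_group n S \<Longrightarrow> B \<in> gen_group n S \<Longrightarrow> A * B \<in> gen_group n S"
| inv: "A \<in> gen_group n S \<Longrightarrow> B \<in> carrier_mat n n \<Longrightarrow> A * B = 1\<^sub>m n \<Longrightarrow> B \<in> gen_group n S"

definition is_subspace :: "nat \<Rightarrow> complex vec set \<Rightarrow> bool" where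
  "is_subspace n W \<longleftrightarrow> W \<subseteq> carrier_vec n \<and> 0\<^sub>v n \<in> W \<and>
     (\<forall>v\<in>W. \<forall>w\<in>W. v + w \<in> W) \<and> (\<forall>a. \<forall>v\<in>W. a \<cdot>\<^sub>v v \<in> W)"

definition reducible :: "nat \<Rightarrow> complex mat set \<Rightarrow> bool" where
  "reducible n G \<longleftrightarrow> (\<exists>W. is_subspace n W \<and> W \<noteq> {0\<^sub>v n} \<and> W \<noteq> carrier_vec n \<and>
     (\<forall>A\<in>G. \<forall>w\<in>W. A *\<^sub>v w \<in> W))"

end

theory Submission
  imports Defs "Jordan_Normal_Form.Determinant"
begin

(* The transpositions rho_i permute the coordinates of C^n, and the only subspaces invariant
   under all coordinate permutations are 0, the line of constant vectors, the sum-zero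
   hyperplane and C^n.  A nonzero proper invariant subspace W therefore either consists of
   constant vectors, and then sigma_{1,t} must map the all-ones vector to a constant vector,
   i.e. the rows of its block sum to 1; or W contains a nonconstant vector, hence e_0 - e_1
   and e_0 - e_2, and unless the columns of the block of sigma_{1,t} sum to 1, suitable
   combinations of their images are nonzero multiples of a unit vector, whose orbit spans
   C^n.  Conversely, these two conditions make the line of constant vectors, respectively
   the sum-zero hyperplane, invariant. *)

definition ones_vec :: "nat \<Rightarrow> complex vec" where
  "ones_vec n = vec n (\<lambda>_. 1)"

definition entry_sum :: "complex vec \<Rightarrow> complex" where
  "entry_sum v = (\<Sum>k<dim_vec v. v $ k)"

lemma entry_sum_add:
  "v \<in> carrier_vec n \<Longrightarrow> w \<in> carrier_vec n \<Longrightarrow> entry_sum (v + w) = entry_sum v + entry_sum w"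
  by (simp add: entry_sum_def sum.distrib)

lemma entry_sum_smult: "entry_sum (a \<cdot>\<^sub>v v) = a * entry_sum v"
  by (simp add: entry_sum_def sum_distrib_left)

lemma entry_sum_unit_vec: "k < n \<Longrightarrow> entry_sum (unit_vec n k) = 1"
  by (simp add: entry_sum_def unit_vec_def)

lemma subspace_carrier: "is_subspace n W \<Longrightarrow> W \<subseteq> carrier_vec n"
  by (simp add: is_subspace_def)

lemma subspace_add: "is_subspace n W \<Longrightarrow> v \<in> W \<Longrightarrow> w \<in> W \<Longrightarrow> v + w \<in> W"
  by (simp add: is_subspace_def)

lemma subspace_smult: "is_subspace n W \<Longrightarrow> v \<in> W \<Longrightarrow> a \<cdot>\<^sub>v v \<in> W"
  by (simp add: is_subspace_def)

lemma subspace_diff: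
  assumes W: "is_subspace n W" and "v \<in> W" "w \<in> W"
  shows "v - w \<in> W"
proof -
  have "v - w = v + (-1) \<cdot>\<^sub>v w"
    using assms subspace_carrier[OF W] by (intro eq_vecI) auto
  then show ?thesis using assms by (simp add: subspace_add subspace_smult)
qed

lemma subspace_smult_cancel:
  assumes W: "is_subspace n W" and "a \<noteq> 0" "a \<cdot>\<^sub>v v \<in> W"
  shows "v \<in> W"
  using subspace_smult[OF W assms(3), of "1 / a"] assms(2) by (simp add: smult_smult_assoc)

lemma subspace_eq_carrier_if_unit_vecs:
  assumes W: "is_subspace n W" and units: "\<And>k. k < n \<Longrightarrow> unit_vec n k \<in> W"
  shows "W = carrier_vec n"
proof
  show "carrier_vec n \<subseteq> W"
  proof
    fix x :: "complex vec" assume x: "x \<in> carrier_vec n"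
    have "vec n (\<lambda>j. if j < m then x $ j else 0) \<in> W" if "m \<le> n" for m
      using that
    proof (induction m)
      case 0
      have "vec n (\<lambda>j. if j < 0 then x $ j else 0) = 0\<^sub>v n" by auto
      then show ?case using W by (simp add: is_subspace_def)
    next
      case (Suc m)
      have "vec n (\<lambda>j. if j < Suc m then x $ j else 0) =
          vec n (\<lambda>j. if j < m then x $ j else 0) + x $ m \<cdot>\<^sub>v unit_vec n m"
        by (intro eq_vecI) (auto simp: unit_vec_def less_Suc_eq)
      then show ?case
        using Suc units[of m] W by (simp add: subspace_add subspace_smult)
    qed
    moreover have "vec n (\<lambda>j. if j < n then x $ j else 0) = x" using x by (intro eq_vecI) auto
    ultimately show "x \<in> W" by (metis order_refl)
  qed
qed (fact subspace_carrier[OF W])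

lemma gen_group_carrier_mat:
  assumes "S \<subseteq> carrier_mat n n" "A \<in> gen_group n S"
  shows "A \<in> carrier_mat n n"
  using assms(2) by induction (use assms(1) in auto)

lemma gen_group_fixes_vec:
  assumes S: "S \<subseteq> carrier_mat n n" and v: "v \<in> carrier_vec n"
    and fix_S: "\<And>A. A \<in> S \<Longrightarrow> A *\<^sub>v v = v" and "A \<in> gen_group n S"
  shows "A *\<^sub>v v = v"
  using \<open>A \<in> gen_group n S\<close>
proof induction
  case (mult A B)
  then have "A \<in> carrier_mat n n" "B \<in> carrier_mat n n"
    using gen_group_carrier_mat[OF S] by auto
  then show ?case using mult v by simp
next
  case (inv A B)
  have A: "A \<in> carrier_mat n n" using gen_group_carrier_mat[OF S inv(1)] .
  have "B *\<^sub>v v = (B * A) *\<^sub>v v"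
    using inv A v by (simp add: assoc_mult_mat_vec[symmetric])
  also have "B * A = 1\<^sub>m n" using mat_mult_left_right_inverse[OF A inv(2,3)] .
  finally show ?case using v by simp
qed (use fix_S v in auto)

lemma gen_group_preserves_fun:
  assumes S: "S \<subseteq> carrier_mat n n"
    and pres_S: "\<And>A w. A \<in> S \<Longrightarrow> w \<in> carrier_vec n \<Longrightarrow> f (A *\<^sub>v w) = f w"
    and "A \<in> gen_group n S" "w \<in> carrier_vec n"
  shows "f (A *\<^sub>v w) = f w"
  using assms(3,4)
proof (induction arbitrary: w)
  case (mult A B)
  then have "A \<in> carrier_mat n n" "B \<in> carrier_mat n n"
    using gen_group_carrier_mat[OF S] by auto
  then show ?case using mult by simp
next
  case (inv A B)
  have A: "A \<in> carrier_mat n n" using gen_group_carrier_mat[OF S inv(1)] .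
  have "f (B *\<^sub>v w) = f (A *\<^sub>v (B *\<^sub>v w))" using inv by simp
  also have "\<dots> = f w" using inv A by (simp add: assoc_mult_mat_vec[symmetric])
  finally show ?case .
qed (use pres_S in auto)

lemma reducible_if_ones_vec_fixed:
  assumes n: "2 \<le> n" and S: "S \<subseteq> carrier_mat n n"
    and fix_S: "\<And>A. A \<in> S \<Longrightarrow> A *\<^sub>v ones_vec n = ones_vec n"
  shows "reducible n (gen_group n S)"
  unfolding reducible_def
proof (intro exI conjI)
  let ?L = "range (\<lambda>a. a \<cdot>\<^sub>v ones_vec n)"
  show "is_subspace n ?L"
    unfolding is_subspace_def
  proof (intro conjI ballI allI)
    fix v w assume "v \<in> ?L" "w \<in> ?L"
    then obtain a b where "v = a \<cdot>\<^sub>v ones_vec n" "w = b \<cdot>\<^sub>v ones_vec n" by blast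
    then have "v + w = (a + b) \<cdot>\<^sub>v ones_vec n" by (intro eq_vecI) (auto simp: ones_vec_def)
    then show "v + w \<in> ?L" by blast
  next
    fix a v assume "v \<in> ?L"
    then obtain b where "v = b \<cdot>\<^sub>v ones_vec n" by blast
    then show "a \<cdot>\<^sub>v v \<in> ?L" by (auto simp: smult_smult_assoc)
  next
    have "0\<^sub>v n = 0 \<cdot>\<^sub>v ones_vec n" by (intro eq_vecI) (auto simp: ones_vec_def)
    then show "0\<^sub>v n \<in> ?L" by blast
  qed (auto simp: ones_vec_def)
  have ones_carrier: "ones_vec n \<in> carrier_vec n" by (simp add: ones_vec_def)
  have "ones_vec n $ 0 \<noteq> 0\<^sub>v n $ 0" using n by (simp add: ones_vec_def)
  then have "ones_vec n \<noteq> 0\<^sub>v n" by metis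
  moreover have "ones_vec n \<in> ?L" using rangeI[of "\<lambda>a. a \<cdot>\<^sub>v ones_vec n" 1] by simp
  ultimately show "?L \<noteq> {0\<^sub>v n}" by blast
  have "unit_vec n 0 \<notin> ?L"
  proof
    assume "unit_vec n 0 \<in> ?L"
    then obtain a where a: "unit_vec n 0 = a \<cdot>\<^sub>v ones_vec n" by blast
    have "unit_vec n 0 $ 0 = a" "unit_vec n 0 $ 1 = a"
      using n by (simp_all add: a ones_vec_def)
    then show False using n by simp
  qed
  then show "?L \<noteq> carrier_vec n" by auto
  show "\<forall>A\<in>gen_group n S. \<forall>w\<in>?L. A *\<^sub>v w \<in> ?L"
  proof (intro ballI)
    fix A w assume A: "A \<in> gen_group n S" and "w \<in> ?L"
    then obtain a where w: "w = a \<cdot>\<^sub>v ones_vec n" by blast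
    have "A *\<^sub>v w = a \<cdot>\<^sub>v (A *\<^sub>v ones_vec n)"
      unfolding w using gen_group_carrier_mat[OF S A] ones_carrier by (rule mult_mat_vec)
    also have "\<dots> = w" using gen_group_fixes_vec[OF S ones_carrier fix_S A] w by simp
    finally show "A *\<^sub>v w \<in> ?L" using w by simp
  qed
qed

lemma reducible_if_entry_sum_preserved:
  assumes n: "2 \<le> n" and S: "S \<subseteq> carrier_mat n n"
    and pres_S: "\<And>A w. A \<in> S \<Longrightarrow> w \<in> carrier_vec n \<Longrightarrow> entry_sum (A *\<^sub>v w) = entry_sum w"
  shows "reducible n (gen_group n S)"
  unfolding reducible_def
proof (intro exI conjI)
  let ?H = "{w \<in> carrier_vec n. entry_sum w = 0}"
  show "is_subspace n ?H"
    by (auto simp: is_subspace_def entry_sum_add entry_sum_smult) (simp add: entry_sum_def)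
  let ?d = "unit_vec n 0 + (-1) \<cdot>\<^sub>v unit_vec n 1 :: complex vec"
  have "?d \<in> ?H"
    using n by (simp add: entry_sum_add[of _ n] entry_sum_smult entry_sum_unit_vec)
  moreover have "?d $ 0 \<noteq> 0\<^sub>v n $ 0"
    using n by simp
  ultimately show "?H \<noteq> {0\<^sub>v n}" by (metis singletonD)
  have "unit_vec n 0 \<notin> ?H"
    using n by (simp add: entry_sum_unit_vec)
  then show "?H \<noteq> carrier_vec n" by (metis unit_vec_carrier)
  show "\<forall>A\<in>gen_group n S. \<forall>w\<in>?H. A *\<^sub>v w \<in> ?H"
  proof (intro ballI)
    fix A w assume A: "A \<in> gen_group n S" and "w \<in> ?H"
    then have w: "w \<in> carrier_vec n" "entry_sum w = 0" by blast+
    have "entry_sum (A *\<^sub>v w) = entry_sum w"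
      using gen_group_preserves_fun[OF S pres_S A w(1)] .
    moreover have "A *\<^sub>v w \<in> carrier_vec n"
      using gen_group_carrier_mat[OF S A] w by (simp add: mult_mat_vec_carrier)
    ultimately show "A *\<^sub>v w \<in> ?H" using w by simp
  qed
qed

lemma mat2_index [simp]:
  "mat2 a b c d $$ (0, 0) = a" "mat2 a b c d $$ (0, 1) = b"
  "mat2 a b c d $$ (1, 0) = c" "mat2 a b c d $$ (1, 1) = d"
  by (simp_all add: mat2_def mat_of_rows_list_def)

lemmas mat2_index_Suc [simp] = mat2_index[unfolded One_nat_def]

lemma blk_carrier_mat [simp]: "blk n i M \<in> carrier_mat n n"
  by (simp add: blk_def)

lemma blk_mult_vec:
  assumes "1 \<le> i" "i < n" "w \<in> carrier_vec n"
  shows "blk n i M *\<^sub>v w = vec n (\<lambda>k.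
    if k = i - 1 then M $$ (0, 0) * w $ (i - 1) + M $$ (0, 1) * w $ i
    else if k = i then M $$ (1, 0) * w $ (i - 1) + M $$ (1, 1) * w $ i
    else w $ k)" (is "_ = vec n ?f")
proof (rule eq_vecI)
  fix k assume "k < dim_vec (vec n ?f)"
  then have k: "k < n" by simp
  have "(blk n i M *\<^sub>v w) $ k = (\<Sum>b<n. blk n i M $$ (k, b) * w $ b)"
    using k assms(3) by (simp add: blk_def scalar_prod_def atLeast0LessThan)
  also have "\<dots> = (\<Sum>b<n.
      (if b = i - 1 then (if k = i - 1 then M $$ (0, 0) else if k = i then M $$ (1, 0) else 0) * w $ b else 0)
    + (if b = i then (if k = i - 1 then M $$ (0, 1) else if k = i then M $$ (1, 1) else 0) * w $ b else 0)
    + (if b = k \<and> k \<noteq> i - 1 \<and> k \<noteq> i then w $ k else 0))"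
    using assms k by (intro sum.cong) (auto simp: blk_def)
  also have "\<dots> = vec n ?f $ k"
    using assms k by (simp add: sum.distrib less_imp_diff_less)
  finally show "(blk n i M *\<^sub>v w) $ k = vec n ?f $ k" .
qed (use assms in \<open>auto simp: blk_def\<close>)

lemma blk_mult_ones_vec:
  assumes "1 \<le> i" "i < n"
    and "M $$ (0, 0) + M $$ (0, 1) = 1" "M $$ (1, 0) + M $$ (1, 1) = 1"
  shows "blk n i M *\<^sub>v ones_vec n = ones_vec n"
  using assms by (intro eq_vecI) (auto simp: blk_mult_vec ones_vec_def)

lemma entry_sum_blk_mult_vec:
  assumes "1 \<le> i" "i < n" "w \<in> carrier_vec n"
    and "M $$ (0, 0) + M $$ (1, 0) = 1" "M $$ (0, 1) + M $$ (1, 1) = 1"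
  shows "entry_sum (blk n i M *\<^sub>v w) = entry_sum w"
proof -
  have "entry_sum (blk n i M *\<^sub>v w) = (\<Sum>k<n. w $ k
      + (if k = i - 1 then (M $$ (0, 0) - 1) * w $ (i - 1) + M $$ (0, 1) * w $ i else 0)
      + (if k = i then M $$ (1, 0) * w $ (i - 1) + (M $$ (1, 1) - 1) * w $ i else 0))"
    unfolding entry_sum_def using assms by (intro sum.cong) (auto simp: blk_mult_vec algebra_simps)
  also have "\<dots> = entry_sum w + (M $$ (0, 0) + M $$ (1, 0) - 1) * w $ (i - 1)
      + (M $$ (0, 1) + M $$ (1, 1) - 1) * w $ i"
    using assms(1-3) by (simp add: sum.distrib entry_sum_def less_imp_diff_less algebra_simps)
  also have "\<dots> = entry_sum w"
    using assms(4,5) by simp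
  finally show ?thesis .
qed

lemma rho_img_mult_unit_vec:
  assumes "Suc j < n"
  shows "rho_img n (Suc j) *\<^sub>v unit_vec n j = unit_vec n (Suc j)"
    and "rho_img n (Suc j) *\<^sub>v unit_vec n (Suc j) = unit_vec n j"
  using assms by (auto intro!: eq_vecI simp: rho_img_def blk_mult_vec)

lemma rho_img_mem_gen_imgs: "1 \<le> i \<Longrightarrow> i < n \<Longrightarrow> rho_img n i \<in> gen_imgs n c s1 s2 s3 s4"
  unfolding gen_imgs_def by auto

lemma sigma_img_mem_gen_imgs:
  "1 \<le> i \<Longrightarrow> i < n \<Longrightarrow> 1 \<le> t \<Longrightarrow> t \<le> c \<Longrightarrow> sigma_img n s1 s2 s3 s4 i t \<in> gen_imgs n c s1 s2 s3 s4"
  unfolding gen_imgs_def by (intro UnI2 CollectI exI conjI refl) auto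

lemma gen_imgs_cases:
  assumes "A \<in> gen_imgs n c s1 s2 s3 s4"
  obtains i where "1 \<le> i" "i < n" "A = rho_img n i"
  | i t where "1 \<le> i" "i < n" "1 \<le> t" "t \<le> c" "A = sigma_img n s1 s2 s3 s4 i t"
  using assms unfolding gen_imgs_def by fastforce

lemma gen_imgs_carrier_mat: "gen_imgs n c s1 s2 s3 s4 \<subseteq> carrier_mat n n"
  by (auto elim: gen_imgs_cases simp: rho_img_def sigma_img_def)

lemma gen_imgs_fix_ones_vec:
  assumes "\<forall>t. 1 \<le> t \<and> t \<le> c \<longrightarrow> s1 t + s2 t = 1 \<and> s3 t + s4 t = 1"
    and "A \<in> gen_imgs n c s1 s2 s3 s4"
  shows "A *\<^sub>v ones_vec n = ones_vec n"
  using assms(2) by (cases rule: gen_imgs_cases)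
    (use assms(1) in \<open>auto simp: rho_img_def sigma_img_def intro: blk_mult_ones_vec\<close>)

lemma gen_imgs_preserve_entry_sum:
  assumes "\<forall>t. 1 \<le> t \<and> t \<le> c \<longrightarrow> s1 t + s3 t = 1 \<and> s2 t + s4 t = 1"
    and "A \<in> gen_imgs n c s1 s2 s3 s4" "w \<in> carrier_vec n"
  shows "entry_sum (A *\<^sub>v w) = entry_sum w"
  using assms(2) by (cases rule: gen_imgs_cases)
    (use assms(1,3) in \<open>auto simp: rho_img_def sigma_img_def intro: entry_sum_blk_mult_vec\<close>)

lemma eq_smult_ones_vec_if_adjacent_eq:
  assumes w: "w \<in> carrier_vec n" and adj: "\<And>a. Suc a < n \<Longrightarrow> w $ a = w $ Suc a"
  shows "w = w $ 0 \<cdot>\<^sub>v ones_vec n"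
proof -
  have const: "w $ k = w $ 0" if "k < n" for k
    using that
  proof (induction k)
    case (Suc k)
    then show ?case by (metis Suc_lessD adj)
  qed simp
  show ?thesis
  proof (rule eq_vecI)
    fix k assume "k < dim_vec (w $ 0 \<cdot>\<^sub>v ones_vec n)"
    then show "w $ k = (w $ 0 \<cdot>\<^sub>v ones_vec n) $ k" using const[of k] by (simp add: ones_vec_def)
  qed (use w in \<open>simp add: ones_vec_def\<close>)
qed

locale rho_invariant_subspace =
  fixes n :: nat and W :: "complex vec set"
  assumes subspace: "is_subspace n W"
    and rho_closed: "\<And>i w. 1 \<le> i \<Longrightarrow> i < n \<Longrightarrow> w \<in> W \<Longrightarrow> rho_img n i *\<^sub>v w \<in> W"
begin

lemma unit_vec_diff_mem_if_adjacent_neq: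
  assumes w: "w \<in> W" and a: "Suc a < n" and neq: "w $ a \<noteq> w $ Suc a"
  shows "unit_vec n a - unit_vec n (Suc a) \<in> W"
proof -
  have "w \<in> carrier_vec n" using w subspace_carrier[OF subspace] by blast
  then have "rho_img n (Suc a) *\<^sub>v w - w = (w $ Suc a - w $ a) \<cdot>\<^sub>v (unit_vec n a - unit_vec n (Suc a))"
    using a by (intro eq_vecI) (auto simp: rho_img_def blk_mult_vec)
  moreover have "rho_img n (Suc a) *\<^sub>v w - w \<in> W"
    using a w by (intro subspace_diff[OF subspace] rho_closed) auto
  ultimately show ?thesis
    using neq by (metis right_minus_eq subspace_smult_cancel[OF subspace])
qed

lemma first_unit_vec_diff_mem:
  "unit_vec n a - unit_vec n (Suc a) \<in> W \<Longrightarrow> Suc a < n \<Longrightarrow> unit_vec n 0 - unit_vec n 1 \<in> W"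
proof (induction a)
  case (Suc a)
  let ?d = "unit_vec n (Suc a) - unit_vec n (Suc (Suc a)) :: complex vec"
  have "rho_img n (Suc a) *\<^sub>v ?d - ?d = unit_vec n a - unit_vec n (Suc a)"
    using Suc.prems by (intro eq_vecI) (auto simp: rho_img_def blk_mult_vec)
  moreover have "rho_img n (Suc a) *\<^sub>v ?d \<in> W"
    using Suc.prems by (intro rho_closed) auto
  then have "rho_img n (Suc a) *\<^sub>v ?d - ?d \<in> W"
    using Suc.prems(1) by (rule subspace_diff[OF subspace])
  ultimately show ?case using Suc by simp
qed simp

lemma eq_carrier_if_unit_vec_mem:
  assumes "unit_vec n j \<in> W" "j < n"
  shows "W = carrier_vec n"
proof -
  have e0: "unit_vec n 0 \<in> W"
    using assms
  proof (induction j)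
    case (Suc j)
    then have "rho_img n (Suc j) *\<^sub>v unit_vec n (Suc j) \<in> W" by (intro rho_closed) auto
    then show ?case using Suc rho_img_mult_unit_vec(2)[of j n] by simp
  qed
  have "unit_vec n k \<in> W" if "k < n" for k
    using that
  proof (induction k)
    case (Suc k)
    then have "rho_img n (Suc k) *\<^sub>v unit_vec n k \<in> W" by (intro rho_closed) auto
    then show ?case using Suc rho_img_mult_unit_vec(1)[of k n] by simp
  qed (use e0 in simp)
  then show ?thesis by (rule subspace_eq_carrier_if_unit_vecs[OF subspace])
qed

end

lemma column_sums_if_nonconstant_mem:
  assumes "rho_invariant_subspace n W" and proper: "W \<noteq> carrier_vec n" and n: "3 \<le> n"
    and blk_closed: "\<And>v. v \<in> W \<Longrightarrow> blk n 1 M *\<^sub>v v \<in> W"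
    and "w \<in> W" "Suc a < n" "w $ a \<noteq> w $ Suc a"
  shows "M $$ (0, 0) + M $$ (1, 0) = 1 \<and> M $$ (0, 1) + M $$ (1, 1) = 1"
proof -
  interpret rho_invariant_subspace n W by fact
  let ?e = "unit_vec n :: nat \<Rightarrow> complex vec"
  have d01: "?e 0 - ?e 1 \<in> W"
    using assms(5-) by (intro first_unit_vec_diff_mem unit_vec_diff_mem_if_adjacent_neq)
  have "rho_img n 2 *\<^sub>v (?e 0 - ?e 1) = ?e 0 - ?e 2"
    using n by (intro eq_vecI) (auto simp: rho_img_def blk_mult_vec)
  then have d02: "?e 0 - ?e 2 \<in> W"
    using rho_closed[OF _ _ d01, of 2] n by simp
  have "(?e 0 - ?e 2) - (?e 0 - ?e 1) = ?e 1 - ?e 2"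
    by (intro eq_vecI) auto
  then have d12: "?e 1 - ?e 2 \<in> W"
    using subspace_diff[OF subspace d02 d01] by simp
  have "(M $$ (0, 0) + M $$ (1, 0) - 1) \<cdot>\<^sub>v ?e 0
      = blk n 1 M *\<^sub>v (?e 0 - ?e 2) + M $$ (1, 0) \<cdot>\<^sub>v (?e 0 - ?e 1) - (?e 0 - ?e 2)"
    using n by (intro eq_vecI) (auto simp: blk_mult_vec algebra_simps)
  then have col0: "(M $$ (0, 0) + M $$ (1, 0) - 1) \<cdot>\<^sub>v ?e 0 \<in> W"
    using d01 d02 blk_closed
    by (simp add: subspace_add[OF subspace] subspace_smult[OF subspace] subspace_diff[OF subspace])
  have "(M $$ (0, 1) + M $$ (1, 1) - 1) \<cdot>\<^sub>v ?e 1
      = blk n 1 M *\<^sub>v (?e 1 - ?e 2) - M $$ (0, 1) \<cdot>\<^sub>v (?e 0 - ?e 1) - (?e 1 - ?e 2)"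
    using n by (intro eq_vecI) (auto simp: blk_mult_vec algebra_simps)
  then have col1: "(M $$ (0, 1) + M $$ (1, 1) - 1) \<cdot>\<^sub>v ?e 1 \<in> W"
    using d01 d12 blk_closed
    by (simp add: subspace_smult[OF subspace] subspace_diff[OF subspace])
  have "?e k \<notin> W" if "k < n" for k
    using eq_carrier_if_unit_vec_mem[OF _ that] proper by blast
  then show ?thesis
    using subspace_smult_cancel[OF subspace _ col0] subspace_smult_cancel[OF subspace _ col1] n
    by force
qed

lemma row_sums_if_all_constant:
  assumes W: "is_subspace n W" and nonzero: "W \<noteq> {0\<^sub>v n}" and n: "3 \<le> n"
    and blk_closed: "\<And>v. v \<in> W \<Longrightarrow> blk n 1 M *\<^sub>v v \<in> W"
    and const: "\<And>v a. v \<in> W \<Longrightarrow> Suc a < n \<Longrightarrow> v $ a = v $ Suc a"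
  shows "M $$ (0, 0) + M $$ (0, 1) = 1 \<and> M $$ (1, 0) + M $$ (1, 1) = 1"
proof -
  obtain w where w: "w \<in> W" "w \<noteq> 0\<^sub>v n"
    using nonzero W by (auto simp: is_subspace_def)
  have w_carrier: "w \<in> carrier_vec n" using w(1) subspace_carrier[OF W] by blast
  have w_ones: "w = w $ 0 \<cdot>\<^sub>v ones_vec n"
    using w_carrier const[OF w(1)] by (rule eq_smult_ones_vec_if_adjacent_eq)
  have "w $ 0 \<noteq> 0"
  proof
    assume "w $ 0 = 0"
    then have "w = 0 \<cdot>\<^sub>v ones_vec n" using w_ones by metis
    also have "\<dots> = 0\<^sub>v n" by (intro eq_vecI) (auto simp: ones_vec_def)
    finally show False using w(2) by contradiction
  qed
  then have "ones_vec n \<in> W"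
    using w(1) w_ones by (metis subspace_smult_cancel[OF W])
  then have v: "blk n 1 M *\<^sub>v ones_vec n \<in> W" by (rule blk_closed)
  show ?thesis
    using const[OF v, of 0] const[OF v, of 1] n
    by (simp add: blk_mult_vec ones_vec_def numeral_2_eq_2)
qed

lemma reducible_imp_row_or_column_sums:
  assumes n: "3 \<le> n" and "reducible n (gen_group n (gen_imgs n c s1 s2 s3 s4))"
  shows "(\<forall>t. 1 \<le> t \<and> t \<le> c \<longrightarrow> s1 t + s2 t = 1 \<and> s3 t + s4 t = 1) \<or>
    (\<forall>t. 1 \<le> t \<and> t \<le> c \<longrightarrow> s1 t + s3 t = 1 \<and> s2 t + s4 t = 1)"
proof -
  obtain W where W: "is_subspace n W" and nonzero: "W \<noteq> {0\<^sub>v n}" and proper: "W \<noteq> carrier_vec n"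
    and closed: "\<forall>A\<in>gen_group n (gen_imgs n c s1 s2 s3 s4). \<forall>w\<in>W. A *\<^sub>v w \<in> W"
    using assms(2) unfolding reducible_def by blast
  have gen_closed: "A *\<^sub>v w \<in> W" if "A \<in> gen_imgs n c s1 s2 s3 s4" "w \<in> W" for A w
    using closed gen_group.gen[OF that(1)] that(2) by blast
  have rho: "rho_invariant_subspace n W"
    using W gen_closed[OF rho_img_mem_gen_imgs] by unfold_locales
  have sigma_closed: "blk n 1 (mat2 (s1 t) (s2 t) (s3 t) (s4 t)) *\<^sub>v w \<in> W"
    if "1 \<le> t" "t \<le> c" "w \<in> W" for t w
    using gen_closed[OF sigma_img_mem_gen_imgs] that n by (simp add: sigma_img_def)
  show ?thesis
  proof (cases "\<exists>w\<in>W. \<exists>a. Suc a < n \<and> w $ a \<noteq> w $ Suc a")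
    case True
    then obtain w a where "w \<in> W" "Suc a < n" "w $ a \<noteq> w $ Suc a" by blast
    then have "s1 t + s3 t = 1 \<and> s2 t + s4 t = 1" if "1 \<le> t" "t \<le> c" for t
      using column_sums_if_nonconstant_mem[OF rho proper n sigma_closed[OF that]] by simp
    then show ?thesis by blast
  next
    case False
    then have "s1 t + s2 t = 1 \<and> s3 t + s4 t = 1" if "1 \<le> t" "t \<le> c" for t
      using row_sums_if_all_constant[OF W nonzero n sigma_closed[OF that]] by simp
    then show ?thesis by blast
  qed
qed

theorem theorem3p4:
  fixes n c :: nat and s1 s2 s3 s4 :: "nat \<Rightarrow> complex"
  assumes "n \<ge> 3" and "c \<ge> 1"
    and "\<forall>t. 1 \<le> t \<and> t \<le> c \<longrightarrow> s1 t * s4 t - s2 t * s3 t \<noteq> 0"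
  shows "reducible n (gen_group n (gen_imgs n c s1 s2 s3 s4)) \<longleftrightarrow>
    ((\<forall>t. 1 \<le> t \<and> t \<le> c \<longrightarrow> s1 t + s2 t = 1 \<and> s3 t + s4 t = 1) \<or>
     (\<forall>t. 1 \<le> t \<and> t \<le> c \<longrightarrow> s1 t + s3 t = 1 \<and> s2 t + s4 t = 1))"
    (is "reducible n ?G \<longleftrightarrow> ?rows \<or> ?cols")
proof
  assume "reducible n ?G"
  with \<open>n \<ge> 3\<close> show "?rows \<or> ?cols" by (rule reducible_imp_row_or_column_sums)
next
  have n: "2 \<le> n" using \<open>n \<ge> 3\<close> by simp
  assume "?rows \<or> ?cols"
  then show "reducible n ?G"
  proof
    assume ?rows
    from gen_imgs_fix_ones_vec[OF this] show ?thesis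
      by (rule reducible_if_ones_vec_fixed[OF n gen_imgs_carrier_mat])
  next
    assume ?cols
    from gen_imgs_preserve_entry_sum[OF this] show ?thesis
      by (rule reducible_if_entry_sum_preserved[OF n gen_imgs_carrier_mat])
  qed
qed

end
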